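(* Let $I\subset[0,\infty)$ be an interval, let $a,b\in I^\circ$ with $a<b$, and let $f:I\to\mathbb{R}$ be twice differentiable on $I^\circ$ with $f''\in L^1([a,b])$. Let $q>1$, $p=\frac{q}{q-1}$, and assume $|f''|^q$ is $h$-convex on $[a,b]$. Then $$\left|\frac{1}{b-a}\int_a^b f(x)\,dx-f\Big(\frac{a+b}{2}\Big)\right|\le \frac{(b-a)^2}{8}\Big(\frac{1}{2p+1}\Big)^{1/p}\Big(\big[|f''(a)|^q+|f''(b)|^q\big]\int_0^1 h(t)\,dt\Big)^{1/q}.$$
   Context: Let $J$ be an interval with $(0,1)\subseteq J$ and $h:J\to\mathbb{R}$ a non-negative function, not identically zero, which is Lebesgue integrable on $(0,1)$. A non-negative function $g$ defined on an interval $K$ is called $h$-convex on $K$ if for all $x,y\in K$ and all $t\in(0,1)$: $g(tx+(1-t)y)\le h(t)g(x)+h(1-t)g(y)$. $I^\circ$ denotes the interior of $I$. *)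

theory Defs
  imports "HOL-Analysis.Analysis"
begin

definition h_convex_on :: "(real \<Rightarrow> real) \<Rightarrow> real set \<Rightarrow> (real \<Rightarrow> real) \<Rightarrow> bool" where
  "h_convex_on h K g \<longleftrightarrow>
     (\<forall>x\<in>K. 0 \<le> g x) \<and>
     (\<forall>x\<in>K. \<forall>y\<in>K. \<forall>t\<in>{0<..<1}.
        g (t * x + (1 - t) * y) \<le> h t * g x + h (1 - t) * g y)"

end

(*
  Integrating by parts twice on each half of [a, b] gives the Peano-kernel identity
    int_a^b f - (b - a) f((a + b)/2) = int_a^b K f'',   K(x) = min(x - a, b - x)^2 / 2.
  Hoelder's inequality bounds the right-hand side by ||K||_p ||f''||_q, and ||K||_p is explicit.
  Finally h-convexity gives, for x = t a + (1 - t) b,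
    |f''(x)|^q <= h(t) |f''(a)|^q + h(1 - t) |f''(b)|^q,
  and integrating over [a, b] bounds ||f''||_q^q by (b - a) (|f''(a)|^q + |f''(b)|^q) int_0^1 h.
*)
theory Submission
  imports Defs "HOL-Real_Asymp.Real_Asymp"
begin

text \<open>Hoelder's inequality by optimising the scale \<open>s\<close> in Young's inequality for
  \<open>(s u) (v / s)\<close>; a vanishing factor is handled by letting \<open>s\<close> tend to \<open>\<infinity>\<close> or \<open>0\<close>, which
  avoids any almost-everywhere reasoning.\<close>

lemma le_powr_prod_if_le_scaled_Young:
  fixes X A B p q :: real
  assumes A: "A \<ge> 0" and B: "B \<ge> 0" and p: "p > 0" and q: "q > 0" and pq: "1/p + 1/q = 1"
    and scaled: "\<And>s. s > 0 \<Longrightarrow> X \<le> s powr p * A / p + B / (s powr q * q)"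
  shows "X \<le> A powr (1/p) * B powr (1/q)"
proof (cases "A = 0 \<or> B = 0")
  case True
  have "X \<le> 0"
  proof (cases "A = 0")
    case True
    have "((\<lambda>s. B / (s powr q * q)) \<longlongrightarrow> 0) at_top"
      using q by real_asymp
    moreover have "\<forall>\<^sub>F s in at_top. X \<le> B / (s powr q * q)"
      using eventually_gt_at_top[of 0] by eventually_elim (use scaled True in auto)
    ultimately show ?thesis by (rule tendsto_lowerbound) simp
  next
    case False
    with \<open>A = 0 \<or> B = 0\<close> have "B = 0" by simp
    have "((\<lambda>s. s powr p * A / p) \<longlongrightarrow> 0) (at_right 0)"
      using p by real_asymp
    moreover have "\<forall>\<^sub>F s in at_right 0. X \<le> s powr p * A / p"
      using eventually_at_right_less[of 0] by eventually_elim (use scaled \<open>B = 0\<close> in auto)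
    ultimately show ?thesis by (rule tendsto_lowerbound) simp
  qed
  with True show ?thesis by auto
next
  case False
  with A B have A: "A > 0" and B: "B > 0" by auto
  define C where "C = A powr (1/p) * B powr (1/q)"
  \<comment> \<open>the scale at which both terms equal \<open>C\<close>\<close>
  define s where "s = (B / A) powr (1/(p*q))"
  have "s > 0" unfolding s_def using A B by simp
  have "s powr p * A = B powr (1/q) / A powr (1/q) * (A powr (1/p) * A powr (1/q))"
    unfolding s_def using A B p pq by (simp add: powr_powr powr_divide flip: powr_add)
  also have "\<dots> = C" unfolding C_def using A by simp
  finally have first_term: "s powr p * A = C" .
  have "B / s powr q = (B powr (1/p) * B powr (1/q)) / (B powr (1/p) / A powr (1/p))"
    unfolding s_def using A B q pq by (simp add: powr_powr powr_divide flip: powr_add)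
  also have "\<dots> = C" unfolding C_def using B by simp
  finally have second_term: "B / s powr q = C" .
  have "X \<le> C / p + C / q"
    using scaled[OF \<open>s > 0\<close>] unfolding divide_divide_eq_left[symmetric] first_term second_term .
  also have "\<dots> = C * (1/p + 1/q)" by (simp add: algebra_simps)
  also have "\<dots> = C" using pq by simp
  finally show ?thesis unfolding C_def .
qed

lemma Holder_inequality_integral:
  fixes u v :: "'a::euclidean_space \<Rightarrow> real" and p q :: real
  assumes p: "p > 1" and q: "q > 1" and pq: "1/p + 1/q = 1"
    and u: "\<And>x. x \<in> S \<Longrightarrow> u x \<ge> 0" and v: "\<And>x. x \<in> S \<Longrightarrow> v x \<ge> 0"
    and uv_int: "(\<lambda>x. u x * v x) integrable_on S"
    and up_int: "(\<lambda>x. u x powr p) integrable_on S"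
    and vq_int: "(\<lambda>x. v x powr q) integrable_on S"
  shows "integral S (\<lambda>x. u x * v x)
     \<le> integral S (\<lambda>x. u x powr p) powr (1/p) * integral S (\<lambda>x. v x powr q) powr (1/q)"
proof (rule le_powr_prod_if_le_scaled_Young)
  show "integral S (\<lambda>x. u x powr p) \<ge> 0" "integral S (\<lambda>x. v x powr q) \<ge> 0"
    by (simp_all add: integral_nonneg up_int vq_int)
  fix s :: real assume s: "s > 0"
  let ?young = "\<lambda>x. s powr p / p * u x powr p + 1 / (s powr q * q) * v x powr q"
  have "u x * v x \<le> ?young x" if "x \<in> S" for x
  proof -
    have "u x * v x = (s * u x) * (v x / s)" using s by simp
    also have "\<dots> \<le> (s * u x) powr p / p + (v x / s) powr q / q"
      using Youngs_inequality[OF p q pq, of "s * u x" "v x / s"] u v that s by simp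
    also have "\<dots> = ?young x"
      using s u v that by (simp add: powr_mult powr_divide)
    finally show ?thesis .
  qed
  then have "integral S (\<lambda>x. u x * v x) \<le> integral S ?young"
    by (intro integral_le uv_int integrable_add integrable_on_mult_right up_int vq_int)
  also have "\<dots> = s powr p * integral S (\<lambda>x. u x powr p) / p
                  + integral S (\<lambda>x. v x powr q) / (s powr q * q)"
    by (simp only: integral_add integrable_on_mult_right up_int vq_int integral_mult_right) simp
  finally show "integral S (\<lambda>x. u x * v x) \<le> \<dots>" .
qed (use p q pq in auto)

lemma has_integral_powr_diff_left:
  fixes c d r :: real
  assumes "r > -1" "c \<le> d"
  shows "((\<lambda>x. (x - c) powr r) has_integral (d - c) powr (r + 1) / (r + 1)) {c..d}"
  using has_integral_shift_Icc_real[of "\<lambda>x. (x - c) powr r" c _ 0 "d - c"]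
    has_integral_powr_from_0[of r "d - c"] assms
  by (simp add: o_def)

lemma has_integral_powr_diff_right:
  fixes c d r :: real
  assumes "r > -1" "c \<le> d"
  shows "((\<lambda>x. (d - x) powr r) has_integral (d - c) powr (r + 1) / (r + 1)) {c..d}"
  using has_integral_reflect_real[of "\<lambda>x. (d - x) powr r" _ d c]
    has_integral_powr_diff_left[of r "-d" "-c"] assms
  by (simp add: add.commute)

definition midpoint_kernel :: "real \<Rightarrow> real \<Rightarrow> real \<Rightarrow> real" where
  "midpoint_kernel a b x = (min (x - a) (b - x))\<^sup>2 / 2"

lemma midpoint_kernel_nonneg: "midpoint_kernel a b x \<ge> 0"
  by (simp add: midpoint_kernel_def)

lemma half_square_powr:
  fixes y p :: real
  assumes "y \<ge> 0"
  shows "(y\<^sup>2 / 2) powr p = y powr (2 * p) / 2 powr p"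
proof (cases "y = 0")
  case False
  with assms have "y\<^sup>2 = y powr 2" by (simp add: powr_realpow)
  then have "(y\<^sup>2 / 2) powr p = (y powr 2) powr p / 2 powr p"
    using assms by (simp add: powr_divide)
  then show ?thesis unfolding powr_powr by (simp add: mult.commute)
qed simp

lemma midpoint_kernel_powr_has_integral:
  fixes a b p :: real
  assumes "a < b" "p \<ge> 0"
  shows "((\<lambda>x. midpoint_kernel a b x powr p)
           has_integral (b - a) powr (2 * p + 1) / (8 powr p * (2 * p + 1))) {a..b}"
proof -
  define m where "m = (a + b) / 2"
  define J where "J = ((b - a) / 2) powr (2 * p + 1) / (2 * p + 1) / 2 powr p"
  have am: "a \<le> m" "m \<le> b" and half: "m - a = (b - a) / 2" "b - m = (b - a) / 2"
    using assms unfolding m_def by (auto simp: field_simps)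
  have "((\<lambda>x. (x - a) powr (2 * p) / 2 powr p) has_integral J) {a..m}"
    using has_integral_divide[OF has_integral_powr_diff_left[of "2 * p" a m]] assms am half
    by (simp add: J_def)
  then have left: "((\<lambda>x. midpoint_kernel a b x powr p) has_integral J) {a..m}"
  proof (rule has_integral_eq[rotated])
    fix x assume "x \<in> {a..m}"
    then have "min (x - a) (b - x) = x - a" "x - a \<ge> 0" unfolding m_def by auto
    then show "(x - a) powr (2 * p) / 2 powr p = midpoint_kernel a b x powr p"
      by (simp add: midpoint_kernel_def half_square_powr)
  qed
  have "((\<lambda>x. (b - x) powr (2 * p) / 2 powr p) has_integral J) {m..b}"
    using has_integral_divide[OF has_integral_powr_diff_right[of "2 * p" m b]] assms am half
    by (simp add: J_def)
  then have right: "((\<lambda>x. midpoint_kernel a b x powr p) has_integral J) {m..b}"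
  proof (rule has_integral_eq[rotated])
    fix x assume "x \<in> {m..b}"
    then have "min (x - a) (b - x) = b - x" "b - x \<ge> 0" unfolding m_def by auto
    then show "(b - x) powr (2 * p) / 2 powr p = midpoint_kernel a b x powr p"
      by (simp add: midpoint_kernel_def half_square_powr)
  qed
  have total: "J + J = (b - a) powr (2 * p + 1) / (8 powr p * (2 * p + 1))"
  proof -
    have "(8::real) powr p = 2 powr (3 * p)"
      using powr_powr[of 2 3 p] by simp
    moreover have "(2::real) powr (2 * p + 1) * 2 powr p = 2 powr (3 * p) * 2 powr 1"
      by (simp only: powr_add[symmetric]) (simp add: algebra_simps)
    ultimately have "(2::real) powr (2 * p + 1) * 2 powr p = 2 * 8 powr p"
      by simp
    moreover have "J + J = 2 * (b - a) powr (2 * p + 1) / ((2 powr (2 * p + 1) * 2 powr p) * (2 * p + 1))"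
      using assms unfolding J_def by (simp add: powr_divide)
    ultimately show ?thesis by simp
  qed
  show ?thesis using has_integral_combine[OF am left right] unfolding total .
qed

lemma twice_integrated_by_parts_left:
  fixes f f' f'' :: "real \<Rightarrow> real" and c d :: real
  assumes "c \<le> d"
    and f': "\<And>x. x \<in> {c..d} \<Longrightarrow> (f has_real_derivative f' x) (at x)"
    and f'': "\<And>x. x \<in> {c..d} \<Longrightarrow> (f' has_real_derivative f'' x) (at x)"
  shows "((\<lambda>x. (x - c)\<^sup>2 / 2 * f'' x) has_integral
           (d - c)\<^sup>2 / 2 * f' d - (d - c) * f d + integral {c..d} f) {c..d}"
proof -
  define G where "G x = (x - c)\<^sup>2 / 2 * f' x - (x - c) * f x" for x
  have "((\<lambda>x. (x - c)\<^sup>2 / 2 * f'' x - f x) has_integral G d - G c) {c..d}"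
  proof (rule fundamental_theorem_of_calculus[OF \<open>c \<le> d\<close>])
    fix x assume x: "x \<in> {c..d}"
    have "((\<lambda>x. (x - c)\<^sup>2 / 2) has_real_derivative x - c) (at x)"
      by (auto intro!: derivative_eq_intros)
    moreover have "((\<lambda>x. x - c) has_real_derivative 1) (at x)"
      by (auto intro!: derivative_eq_intros)
    ultimately have "(G has_real_derivative
        ((x - c) * f' x + f'' x * ((x - c)\<^sup>2 / 2)) - (1 * f x + f' x * (x - c))) (at x)"
      unfolding G_def by (intro DERIV_diff DERIV_mult f'[OF x] f''[OF x])
    then have "(G has_real_derivative (x - c)\<^sup>2 / 2 * f'' x - f x) (at x)"
      by (rule DERIV_cong) (simp add: algebra_simps)
    then show "(G has_vector_derivative (x - c)\<^sup>2 / 2 * f'' x - f x) (at x within {c..d})"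
      by (simp add: has_real_derivative_iff_has_vector_derivative has_vector_derivative_at_within)
  qed
  moreover have "f integrable_on {c..d}"
    using f' by (intro integrable_continuous_interval continuous_at_imp_continuous_on)
      (meson DERIV_isCont)
  ultimately have "((\<lambda>x. ((x - c)\<^sup>2 / 2 * f'' x - f x) + f x) has_integral
      G d - G c + integral {c..d} f) {c..d}"
    by (intro has_integral_add integrable_integral)
  moreover have "G d - G c = (d - c)\<^sup>2 / 2 * f' d - (d - c) * f d"
    by (simp add: G_def)
  ultimately show ?thesis by simp
qed

lemma twice_integrated_by_parts_right:
  fixes f f' f'' :: "real \<Rightarrow> real" and c d :: real
  assumes "c \<le> d"
    and f': "\<And>x. x \<in> {c..d} \<Longrightarrow> (f has_real_derivative f' x) (at x)"
    and f'': "\<And>x. x \<in> {c..d} \<Longrightarrow> (f' has_real_derivative f'' x) (at x)"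
  shows "((\<lambda>x. (d - x)\<^sup>2 / 2 * f'' x) has_integral
           - (d - c)\<^sup>2 / 2 * f' c - (d - c) * f c + integral {c..d} f) {c..d}"
proof -
  define G where "G x = (d - x)\<^sup>2 / 2 * f' x + (d - x) * f x" for x
  have "((\<lambda>x. (d - x)\<^sup>2 / 2 * f'' x - f x) has_integral G d - G c) {c..d}"
  proof (rule fundamental_theorem_of_calculus[OF \<open>c \<le> d\<close>])
    fix x assume x: "x \<in> {c..d}"
    have "((\<lambda>x. (d - x)\<^sup>2 / 2) has_real_derivative - (d - x)) (at x)"
      by (auto intro!: derivative_eq_intros)
    moreover have "((\<lambda>x. d - x) has_real_derivative - 1) (at x)"
      by (auto intro!: derivative_eq_intros)
    ultimately have "(G has_real_derivative
        (- (d - x) * f' x + f'' x * ((d - x)\<^sup>2 / 2)) + (- 1 * f x + f' x * (d - x))) (at x)"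
      unfolding G_def by (intro DERIV_add DERIV_mult f'[OF x] f''[OF x])
    then have "(G has_real_derivative (d - x)\<^sup>2 / 2 * f'' x - f x) (at x)"
      by (rule DERIV_cong) (simp add: algebra_simps)
    then show "(G has_vector_derivative (d - x)\<^sup>2 / 2 * f'' x - f x) (at x within {c..d})"
      by (simp add: has_real_derivative_iff_has_vector_derivative has_vector_derivative_at_within)
  qed
  moreover have "f integrable_on {c..d}"
    using f' by (intro integrable_continuous_interval continuous_at_imp_continuous_on)
      (meson DERIV_isCont)
  ultimately have "((\<lambda>x. ((d - x)\<^sup>2 / 2 * f'' x - f x) + f x) has_integral
      G d - G c + integral {c..d} f) {c..d}"
    by (intro has_integral_add integrable_integral)
  moreover have "G d - G c = - (d - c)\<^sup>2 / 2 * f' c - (d - c) * f c"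
    by (simp add: G_def)
  ultimately show ?thesis by simp
qed

lemma midpoint_kernel_has_integral:
  fixes f f' f'' :: "real \<Rightarrow> real" and a b :: real
  assumes "a \<le> b"
    and f': "\<And>x. x \<in> {a..b} \<Longrightarrow> (f has_real_derivative f' x) (at x)"
    and f'': "\<And>x. x \<in> {a..b} \<Longrightarrow> (f' has_real_derivative f'' x) (at x)"
  shows "((\<lambda>x. midpoint_kernel a b x * f'' x) has_integral
           integral {a..b} f - (b - a) * f ((a + b) / 2)) {a..b}"
proof -
  define m where "m = (a + b) / 2"
  have am: "a \<le> m" "m \<le> b" and half: "m - a = (b - a) / 2" "b - m = (b - a) / 2"
    using assms(1) unfolding m_def by (auto simp: field_simps)
  have left: "((\<lambda>x. midpoint_kernel a b x * f'' x) has_integral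
      (m - a)\<^sup>2 / 2 * f' m - (m - a) * f m + integral {a..m} f) {a..m}"
  proof (rule has_integral_eq[rotated])
    show "((\<lambda>x. (x - a)\<^sup>2 / 2 * f'' x) has_integral
        (m - a)\<^sup>2 / 2 * f' m - (m - a) * f m + integral {a..m} f) {a..m}"
      using am by (intro twice_integrated_by_parts_left f' f'') auto
  qed (auto simp: midpoint_kernel_def m_def min_def)
  have right: "((\<lambda>x. midpoint_kernel a b x * f'' x) has_integral
      - (b - m)\<^sup>2 / 2 * f' m - (b - m) * f m + integral {m..b} f) {m..b}"
  proof (rule has_integral_eq[rotated])
    show "((\<lambda>x. (b - x)\<^sup>2 / 2 * f'' x) has_integral
        - (b - m)\<^sup>2 / 2 * f' m - (b - m) * f m + integral {m..b} f) {m..b}"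
      using am by (intro twice_integrated_by_parts_right f' f'') auto
  qed (auto simp: midpoint_kernel_def m_def min_def)
  have "continuous_on {a..b} f"
    using f' by (meson DERIV_isCont continuous_at_imp_continuous_on)
  then have "integral {a..m} f + integral {m..b} f = integral {a..b} f"
    by (intro Henstock_Kurzweil_Integration.integral_combine am integrable_continuous_interval)
  then have "(m - a)\<^sup>2 / 2 * f' m - (m - a) * f m + integral {a..m} f
      + (- (b - m)\<^sup>2 / 2 * f' m - (b - m) * f m + integral {m..b} f)
      = integral {a..b} f - (b - a) * f m"
    unfolding half by (simp add: algebra_simps)
  with has_integral_combine[OF am left right] show ?thesis
    unfolding m_def by simp
qed

lemma midpoint_Holder_constant:
  fixes D p q Q :: real
  assumes D: "D > 0" and p: "p > 0" and pq: "1/p + 1/q = 1" and Q: "Q \<ge> 0"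
  shows "(D powr (2 * p + 1) / (8 powr p * (2 * p + 1))) powr (1/p) * Q powr (1/q) / D
       = D\<^sup>2 / 8 * (1 / (2 * p + 1)) powr (1/p) * (Q / D) powr (1/q)"
proof -
  have "(D powr (2 * p + 1)) powr (1/p) = D powr 2 * D powr (1/p)"
    using p by (simp add: powr_powr field_simps flip: powr_add)
  also have "\<dots> = D\<^sup>2 * D powr (1/p)"
    using D by (simp add: powr_realpow)
  finally have num: "(D powr (2 * p + 1)) powr (1/p) = D\<^sup>2 * D powr (1/p)" .
  have eight: "((8::real) powr p) powr (1/p) = 8"
    using p by (simp add: powr_powr)
  have split_D: "D powr (1/p) * D powr (1/q) = D"
    using D pq by (simp flip: powr_add)
  have "(D powr (2 * p + 1) / (8 powr p * (2 * p + 1))) powr (1/p)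
      = D\<^sup>2 * D powr (1/p) / (8 * (2 * p + 1) powr (1/p))"
    using p by (simp add: powr_divide powr_mult num eight)
  moreover have "D\<^sup>2 * D powr (1/p) / (8 * (2 * p + 1) powr (1/p)) * Q powr (1/q) / D
      = D\<^sup>2 / 8 * (1 / (2 * p + 1) powr (1/p)) * (Q powr (1/q) / D powr (1/q))"
    using split_D D p by (auto simp: field_simps power2_eq_square)
  ultimately show ?thesis
    using D p Q by (simp add: powr_divide)
qed

lemma midpoint_inequality_Holder:
  fixes f f' f'' :: "real \<Rightarrow> real" and a b p q :: real
  assumes "a < b" and p: "p > 1" and q: "q > 1" and pq: "1/p + 1/q = 1"
    and f': "\<And>x. x \<in> {a..b} \<Longrightarrow> (f has_real_derivative f' x) (at x)"
    and f'': "\<And>x. x \<in> {a..b} \<Longrightarrow> (f' has_real_derivative f'' x) (at x)"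
    and f''_abs_int: "f'' absolutely_integrable_on {a..b}"
    and f''q_int: "(\<lambda>x. \<bar>f'' x\<bar> powr q) integrable_on {a..b}"
  shows "\<bar>1 / (b - a) * integral {a..b} f - f ((a + b) / 2)\<bar>
         \<le> (b - a)\<^sup>2 / 8 * (1 / (2 * p + 1)) powr (1/p)
            * (integral {a..b} (\<lambda>x. \<bar>f'' x\<bar> powr q) / (b - a)) powr (1/q)"
proof -
  let ?K = "midpoint_kernel a b"
  let ?Q = "integral {a..b} (\<lambda>x. \<bar>f'' x\<bar> powr q)"
  let ?Kp = "(b - a) powr (2 * p + 1) / (8 powr p * (2 * p + 1))"
  have ident: "((\<lambda>x. ?K x * f'' x) has_integral integral {a..b} f - (b - a) * f ((a + b) / 2)) {a..b}"
    using \<open>a < b\<close> f' f'' by (intro midpoint_kernel_has_integral) auto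
  have K_cont: "continuous_on {a..b} ?K"
    unfolding midpoint_kernel_def by (intro continuous_intros) auto
  have "(\<lambda>x. ?K x * f'' x) absolutely_integrable_on {a..b}"
    by (intro absolutely_integrable_bounded_measurable_product_real f''_abs_int
        continuous_imp_measurable_on_sets_lebesgue K_cont compact_imp_bounded
        compact_continuous_image) auto
  then have "(\<lambda>x. \<bar>?K x * f'' x\<bar>) integrable_on {a..b}"
    by (simp add: absolutely_integrable_on_def)
  then have K_f''_int: "(\<lambda>x. ?K x * \<bar>f'' x\<bar>) integrable_on {a..b}"
    by (simp add: abs_mult midpoint_kernel_nonneg)
  have Kp: "((\<lambda>x. ?K x powr p) has_integral ?Kp) {a..b}"
    using \<open>a < b\<close> p by (intro midpoint_kernel_powr_has_integral) auto
  have "\<bar>1 / (b - a) * integral {a..b} f - f ((a + b) / 2)\<bar>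
      = \<bar>integral {a..b} (\<lambda>x. ?K x * f'' x)\<bar> / (b - a)"
    using integral_unique[OF ident] \<open>a < b\<close> by (simp add: field_simps)
  also have "\<dots> \<le> integral {a..b} (\<lambda>x. ?K x * \<bar>f'' x\<bar>) / (b - a)"
    using integral_norm_bound_integral[OF has_integral_integrable[OF ident] K_f''_int] \<open>a < b\<close>
    by (simp add: abs_mult midpoint_kernel_nonneg divide_right_mono)
  also have "\<dots> \<le> ?Kp powr (1/p) * ?Q powr (1/q) / (b - a)"
    using Holder_inequality_integral[OF p q pq _ _ K_f''_int has_integral_integrable[OF Kp] f''q_int]
      integral_unique[OF Kp] \<open>a < b\<close> by (simp add: midpoint_kernel_nonneg divide_right_mono)
  also have "\<dots> = (b - a)\<^sup>2 / 8 * (1 / (2 * p + 1)) powr (1/p) * (?Q / (b - a)) powr (1/q)"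
    using \<open>a < b\<close> p q pq by (intro midpoint_Holder_constant integral_nonneg f''q_int) auto
  finally show ?thesis .
qed

lemma has_integral_rescale_from_unit_interval:
  fixes h :: "real \<Rightarrow> real"
  assumes h: "(h has_integral I) {0..1}" and "a < b"
  shows "((\<lambda>x. h ((x - a) / (b - a))) has_integral (b - a) * I) {a..b}"
proof -
  have "((\<lambda>x. h (1 / (b - a) * x + - a / (b - a))) has_integral (1 / \<bar>1 / (b - a)\<bar>) *\<^sub>R I)
      ((\<lambda>x. x / (1 / (b - a)) - - a / (b - a) / (1 / (b - a))) ` {0..1})"
    using has_integral_affinity01[OF h, of "1 / (b - a)" "- a / (b - a)"] \<open>a < b\<close> by simp
  moreover have "(\<lambda>x. x / (1 / (b - a)) - - a / (b - a) / (1 / (b - a))) ` {0..1} = {a..b}"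
    using \<open>a < b\<close> by (subst image_affinity_atLeastAtMost_div_diff) auto
  ultimately show ?thesis
    using \<open>a < b\<close> by (simp add: diff_divide_distrib)
qed

lemma has_integral_rescale_reflected_from_unit_interval:
  fixes h :: "real \<Rightarrow> real"
  assumes h: "(h has_integral I) {0..1}" and "a < b"
  shows "((\<lambda>x. h ((b - x) / (b - a))) has_integral (b - a) * I) {a..b}"
proof -
  have "((\<lambda>x. h (- 1 / (b - a) * x + b / (b - a))) has_integral (1 / \<bar>- 1 / (b - a)\<bar>) *\<^sub>R I)
      ((\<lambda>x. x / (- 1 / (b - a)) - b / (b - a) / (- 1 / (b - a))) ` {0..1})"
    using has_integral_affinity01[OF h, of "- 1 / (b - a)" "b / (b - a)"] \<open>a < b\<close> by simp
  moreover have "(\<lambda>x. x / (- 1 / (b - a)) - b / (b - a) / (- 1 / (b - a))) ` {0..1} = {a..b}"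
    using \<open>a < b\<close> by (subst image_affinity_atLeastAtMost_div_diff) auto
  ultimately show ?thesis
    using \<open>a < b\<close> by (simp add: diff_divide_distrib add.commute)
qed

lemma h_convex_on_le_endpoints:
  assumes hc: "h_convex_on h {a..b} g" and x: "a < x" "x < b"
  shows "g x \<le> h ((b - x) / (b - a)) * g a + h ((x - a) / (b - a)) * g b"
proof -
  define t where "t = (b - x) / (b - a)"
  have t: "t \<in> {0<..<1}" and t': "1 - t = (x - a) / (b - a)" and "t * (b - a) = b - x"
    using x unfolding t_def by (auto simp: field_simps)
  then have tx: "t * a + (1 - t) * b = x"
    by (simp add: algebra_simps)
  have "g (t * a + (1 - t) * b) \<le> h t * g a + h (1 - t) * g b"
    using hc t x unfolding h_convex_on_def by auto
  then have "g x \<le> h t * g a + h (1 - t) * g b" by (simp only: tx)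
  then show ?thesis unfolding t' by (simp only: t_def)
qed

lemma h_convex_on_integral_le:
  fixes h g :: "real \<Rightarrow> real"
  assumes "a < b" and h: "(h has_integral H) {0..1}" and hc: "h_convex_on h {a..b} g"
    and g_meas: "g \<in> borel_measurable (lebesgue_on {a..b})"
  shows "g integrable_on {a..b}" "integral {a..b} g \<le> (b - a) * ((g a + g b) * H)"
proof -
  define \<phi> where "\<phi> x = h ((b - x) / (b - a)) * g a + h ((x - a) / (b - a)) * g b" for x
  \<comment> \<open>\<open>\<phi>\<close> dominates \<open>g\<close> except possibly at the endpoints\<close>
  define \<psi> where "\<psi> x = (if x = a \<or> x = b then g x else \<phi> x)" for x
  have "(\<phi> has_integral (b - a) * H * g a + (b - a) * H * g b) {a..b}"
    unfolding \<phi>_def using \<open>a < b\<close>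
    by (intro has_integral_add has_integral_mult_left h
        has_integral_rescale_from_unit_interval has_integral_rescale_reflected_from_unit_interval)
  then have "(\<phi> has_integral (b - a) * ((g a + g b) * H)) {a..b}"
    by (simp add: algebra_simps)
  then have \<psi>: "(\<psi> has_integral (b - a) * ((g a + g b) * H)) {a..b}"
    by (rule has_integral_spike_finite[where S = "{a, b}", rotated 2]) (auto simp: \<psi>_def)
  have g_le: "g x \<le> \<psi> x" if "x \<in> {a..b}" for x
    using h_convex_on_le_endpoints[OF hc] that unfolding \<psi>_def \<phi>_def by auto
  have "g x \<ge> 0" if "x \<in> {a..b}" for x
    using hc that unfolding h_convex_on_def by blast
  with g_le show g_int: "g integrable_on {a..b}"
    by (intro measurable_bounded_by_integrable_imp_integrable[OF g_meas has_integral_integrable[OF \<psi>]])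
      auto
  show "integral {a..b} g \<le> (b - a) * ((g a + g b) * H)"
    using has_integral_le[OF integrable_integral[OF g_int] \<psi>] g_le by blast
qed

lemma abs_powr_measurable_lebesgue_on:
  fixes f :: "'a::euclidean_space \<Rightarrow> real"
  assumes "f integrable_on S" "q > 0"
  shows "(\<lambda>x. \<bar>f x\<bar> powr q) \<in> borel_measurable (lebesgue_on S)"
proof -
  have "continuous_on UNIV (\<lambda>y::real. \<bar>y\<bar> powr q)"
    using \<open>q > 0\<close> by (intro continuous_on_powr' continuous_intros) auto
  then show ?thesis
    by (rule borel_measurable_continuous_on[OF _ integrable_imp_measurable[OF \<open>f integrable_on S\<close>]])
qed

lemma has_integral_LBINT_unit_interval:
  fixes h :: "real \<Rightarrow> real"
  assumes "set_integrable lborel {0<..<1} h"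
  shows "(h has_integral (LBINT t=0..1. h t)) {0..1}"
proof -
  have unit: "einterval 0 1 = {0<..<(1::real)}"
    using einterval_eq_Icc[of 0 1] by (simp add: zero_ereal_def one_ereal_def)
  have "h integrable_on {0..1}"
    using set_borel_integral_eq_integral(1)[OF assms] integrable_on_open_interval_real by blast
  moreover have "(LBINT t=0..1. h t) = integral {0..1} h"
    using interval_integral_eq_integral'[of 0 1 h] assms
    unfolding unit by (simp add: integral_open_interval_real)
  ultimately show ?thesis using integrable_integral by metis
qed

theorem theorem11:
  fixes h :: "real \<Rightarrow> real" and J :: "real set"
    and f f' f'' :: "real \<Rightarrow> real" and I :: "real set"
    and a b p q :: real
  assumes J: "is_interval J" "{0<..<1} \<subseteq> J"
      and h_nonneg: "\<forall>t\<in>J. 0 \<le> h t"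
      and h_nonzero: "\<exists>t\<in>J. h t \<noteq> 0"
      and h_int: "set_integrable lborel {0<..<1} h"
      and I: "is_interval I" "I \<subseteq> {0..}"
      and ab: "a \<in> interior I" "b \<in> interior I" "a < b"
      and f': "\<forall>x\<in>interior I. (f has_real_derivative f' x) (at x)"
      and f'': "\<forall>x\<in>interior I. (f' has_real_derivative f'' x) (at x)"
      and f''_int: "set_integrable lborel {a..b} f''"
      and q: "q > 1" and p: "p = q / (q - 1)"
      and hconv: "h_convex_on h {a..b} (\<lambda>x. \<bar>f'' x\<bar> powr q)"
  shows "\<bar>1 / (b - a) * integral {a..b} f - f ((a + b) / 2)\<bar>
         \<le> (b - a)^2 / 8 * (1 / (2 * p + 1)) powr (1 / p)
            * ((\<bar>f'' a\<bar> powr q + \<bar>f'' b\<bar> powr q) * (LBINT t=0..1. h t)) powr (1 / q)"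
proof -
  let ?Q = "integral {a..b} (\<lambda>x. \<bar>f'' x\<bar> powr q)"
  let ?S = "(\<bar>f'' a\<bar> powr q + \<bar>f'' b\<bar> powr q) * (LBINT t=0..1. h t)"
  have p1: "p > 1" and pq: "1/p + 1/q = 1"
    using q unfolding p by (auto simp: field_simps)
  have "{a..b} \<subseteq> interior I"
    using interval_subset_is_interval[of "interior I" a b] ab I(1) by (simp add: is_interval_convex_1)
  with f' f'' have d1: "\<And>x. x \<in> {a..b} \<Longrightarrow> (f has_real_derivative f' x) (at x)"
    and d2: "\<And>x. x \<in> {a..b} \<Longrightarrow> (f' has_real_derivative f'' x) (at x)" by auto
  have f''_abs: "f'' absolutely_integrable_on {a..b}"
    using set_borel_integral_eq_integral(1)[OF f''_int]
      set_borel_integral_eq_integral(1)[OF set_integrable_norm[OF f''_int]]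
    by (rule absolutely_integrable_onI)
  then have "(\<lambda>x. \<bar>f'' x\<bar> powr q) \<in> borel_measurable (lebesgue_on {a..b})"
    using q by (intro abs_powr_measurable_lebesgue_on) (auto simp: absolutely_integrable_on_def)
  note hh = h_convex_on_integral_le[OF ab(3) has_integral_LBINT_unit_interval[OF h_int] hconv this]
  have "\<bar>1 / (b - a) * integral {a..b} f - f ((a + b) / 2)\<bar>
      \<le> (b - a)\<^sup>2 / 8 * (1 / (2 * p + 1)) powr (1/p) * (?Q / (b - a)) powr (1/q)"
    by (rule midpoint_inequality_Holder[OF ab(3) p1 q pq d1 d2 f''_abs hh(1)])
  also have "\<dots> \<le> (b - a)\<^sup>2 / 8 * (1 / (2 * p + 1)) powr (1/p) * ?S powr (1/q)"
  proof (intro mult_left_mono powr_mono2)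
    show "0 \<le> ?Q / (b - a)"
      using hh(1) ab(3) by (simp add: integral_nonneg)
    show "?Q / (b - a) \<le> ?S"
      using hh(2) ab(3) by (simp add: divide_simps mult.commute)
  qed (use q in auto)
  finally show ?thesis .
qed

end
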